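(* Let $H$ and $K$ be finite-dimensional complex Hilbert spaces, let $A\subseteq B(H)$ be a real operator system (a real linear subspace of the self-adjoint operators in $B(H)$ with $1\in A$), and let $\mathcal{C}$ be a mapping cone on $K$. Let $\phi: A\to B(K)$ be a real-linear map that is $\mathcal{C}$-positive. Then there exists a $\mathcal{C}$-positive linear map $\psi: B(H)\to B(K)$ such that $\psi(a)=\phi(a)$ for all $a\in A$.
   Context: A mapping cone $\mathcal{C}$ on $K$ is a closed convex cone of positive linear maps $B(K)\to B(K)$ such that $\alpha\in\mathcal{C}$ implies $\beta\circ\alpha\circ\gamma\in\mathcal{C}$ for all completely positive maps $\beta,\gamma: B(K)\to B(K)$. Fix an orthonormal basis of $K$ and let $b^t$ denote the transpose of $b\in B(K)$ with respect to it; $Tr$ is the usual trace. For a real or complex linear subspace $A\subseteq B(H)$ containing $1$, let $A\otimes B(K)\subseteq B(H)\otimes B(K)=B(H\otimes K)$ denote the linear span of $\{a\otimes b: a\in A, b\in B(K)\}$. For a (real-)linear map $\phi: A\to B(K)$, its dual functional $\tilde\phi$ is the linear functional on $A\otimes B(K)$ determined by $\tilde\phi(a\otimes b)=Tr(\phi(a)b^t)$. Define $P(A,\mathcal{C})=\{x\in (A\otimes B(K))_{sa} : (\iota\otimes\alpha)(x)\ge 0 \text{ for all } \alpha\in\mathcal{C}\}$, where $\iota$ is the identity map on $B(H)$ and $(\cdot)_{sa}$ denotes self-adjoint elements. The map $\phi$ is called $\mathcal{C}$-positive if $\tilde\phi(x)\ge 0$ for all $x\in P(A,\mathcal{C})$.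 (For $A=B(H)$ this applies to maps $\psi: B(H)\to B(K)$.) *)

theory Defs
  imports "HOL-Analysis.Analysis"
begin

text \<open>H = C^'n and K = C^'m with fixed orthonormal (standard) bases;
  B(H) is identified with complex^'n^'n, B(K) with complex^'m^'m and
  B(H (x) K) with complex^('n * 'm)^('n * 'm) (product basis).\<close>

definition mat_adj :: "complex^'k::finite^'k \<Rightarrow> complex^'k^'k" where
  "mat_adj a = (\<chi> i j. cnj (a $ j $ i))"

definition cscale :: "complex \<Rightarrow> complex^'k::finite^'k \<Rightarrow> complex^'k^'k" where
  "cscale c a = (\<chi> i j. c * a $ i $ j)"

definition sform :: "complex^'k::finite \<Rightarrow> complex^'k^'k \<Rightarrow> complex^'k \<Rightarrow> complex" where
  "sform u M w = (\<Sum>r\<in>UNIV. \<Sum>s\<in>UNIV. cnj (u $ r) * M $ r $ s * w $ s)"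

definition psd :: "complex^'k::finite^'k \<Rightarrow> bool" where
  "psd M \<longleftrightarrow> (\<forall>v. sform v M v \<in> \<real> \<and> 0 \<le> Re (sform v M v))"

text \<open>Positivity of a q x q block matrix X = [X i j] in M_q(B(K)) = B(C^q (x) K).\<close>
definition block_psd :: "nat \<Rightarrow> (nat \<Rightarrow> nat \<Rightarrow> complex^'k::finite^'k) \<Rightarrow> bool" where
  "block_psd q X \<longleftrightarrow> (\<forall>v :: nat \<Rightarrow> complex^'k.
      (\<Sum>i<q. \<Sum>j<q. sform (v i) (X i j) (v j)) \<in> \<real> \<and>
      0 \<le> Re (\<Sum>i<q. \<Sum>j<q. sform (v i) (X i j) (v j)))"

definition complex_linear_map :: "(complex^'a::finite^'a \<Rightarrow> complex^'b::finite^'b) \<Rightarrow> bool" where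
  "complex_linear_map f \<longleftrightarrow> (\<forall>x y. f (x + y) = f x + f y) \<and> (\<forall>c x. f (cscale c x) = cscale c (f x))"

definition positive_map :: "(complex^'a::finite^'a \<Rightarrow> complex^'b::finite^'b) \<Rightarrow> bool" where
  "positive_map f \<longleftrightarrow> complex_linear_map f \<and> (\<forall>x. psd x \<longrightarrow> psd (f x))"

definition completely_positive :: "(complex^'a::finite^'a \<Rightarrow> complex^'b::finite^'b) \<Rightarrow> bool" where
  "completely_positive f \<longleftrightarrow> complex_linear_map f \<and>
     (\<forall>q X. block_psd q X \<longrightarrow> block_psd q (\<lambda>i j. f (X i j)))"

text \<open>Mapping cone on K (closedness in the pointwise = finite-dim. topology).\<close>
definition mapping_cone :: "(complex^'m::finite^'m \<Rightarrow> complex^'m^'m) set \<Rightarrow> bool" where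
  "mapping_cone C \<longleftrightarrow>
     (\<forall>\<alpha>\<in>C. positive_map \<alpha>) \<and> closed C \<and>
     (\<forall>\<alpha>\<in>C. \<forall>\<beta>\<in>C. (\<lambda>x. \<alpha> x + \<beta> x) \<in> C) \<and>
     (\<forall>\<alpha>\<in>C. \<forall>t::real. t \<ge> 0 \<longrightarrow> (\<lambda>x. t *\<^sub>R \<alpha> x) \<in> C) \<and>
     (\<forall>\<alpha>\<in>C. \<forall>\<beta> \<gamma>. completely_positive \<beta> \<longrightarrow> completely_positive \<gamma> \<longrightarrow> \<beta> \<circ> \<alpha> \<circ> \<gamma> \<in> C)"

definition real_operator_system :: "(complex^'n::finite^'n) set \<Rightarrow> bool" where
  "real_operator_system A \<longleftrightarrow> subspace A \<and> (\<forall>a\<in>A. mat_adj a = a) \<and> mat 1 \<in> A"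

definition real_linear_on :: "(complex^'n::finite^'n) set \<Rightarrow> (complex^'n^'n \<Rightarrow> complex^'m::finite^'m) \<Rightarrow> bool" where
  "real_linear_on A \<phi> \<longleftrightarrow> (\<forall>x\<in>A. \<forall>y\<in>A. \<phi> (x + y) = \<phi> x + \<phi> y) \<and>
     (\<forall>r::real. \<forall>x\<in>A. \<phi> (r *\<^sub>R x) = r *\<^sub>R \<phi> x)"

definition tens :: "complex^'n::finite^'n \<Rightarrow> complex^'m::finite^'m \<Rightarrow> complex^('n \<times> 'm)^('n \<times> 'm)" where
  "tens a b = (\<chi> p q. a $ fst p $ fst q * b $ snd p $ snd q)"

text \<open>A (x) B(K): linear span of elementary tensors (real and complex span coincide).\<close>
definition tens_space :: "(complex^'n::finite^'n) set \<Rightarrow> (complex^('n \<times> 'm::finite)^('n \<times> 'm)) set" where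
  "tens_space A = span {tens a (b :: complex^'m^'m) | a b. a \<in> A}"

text \<open>(iota (x) alpha)(x), the linear extension of a (x) b |-> a (x) alpha(b), blockwise.\<close>
definition id_tens :: "(complex^'m::finite^'m \<Rightarrow> complex^'m^'m) \<Rightarrow> complex^('n::finite \<times> 'm)^('n \<times> 'm)
     \<Rightarrow> complex^('n \<times> 'm)^('n \<times> 'm)" where
  "id_tens \<alpha> x = (\<chi> p q. \<alpha> (\<chi> k l. x $ (fst p, k) $ (fst q, l)) $ snd p $ snd q)"

definition P_cone :: "(complex^'n::finite^'n) set \<Rightarrow> (complex^'m::finite^'m \<Rightarrow> complex^'m^'m) set
     \<Rightarrow> (complex^('n \<times> 'm)^('n \<times> 'm)) set" where
  "P_cone A C = {x \<in> tens_space A. mat_adj x = x \<and> (\<forall>\<alpha>\<in>C. psd (id_tens \<alpha> x))}"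

text \<open>c is the value of the dual functional tilde-phi at x, computed from a representation
  x = sum_i a_i (x) b_i with a_i in A, via tilde-phi(a (x) b) = Tr(phi(a) b^t).
  (The value does not depend on the representation.)\<close>
definition dual_value :: "(complex^'n::finite^'n) set \<Rightarrow> (complex^'n^'n \<Rightarrow> complex^'m::finite^'m)
     \<Rightarrow> complex^('n \<times> 'm)^('n \<times> 'm) \<Rightarrow> complex \<Rightarrow> bool" where
  "dual_value A \<phi> x c \<longleftrightarrow> (\<exists>N a (b :: nat \<Rightarrow> complex^'m^'m). (\<forall>i<N. a i \<in> A) \<and> x = (\<Sum>i<N. tens (a i) (b i)) \<and>
      c = (\<Sum>i<N. trace (\<phi> (a i) ** transpose (b i))))"

definition C_positive :: "(complex^'n::finite^'n) set \<Rightarrow> (complex^'m::finite^'m \<Rightarrow> complex^'m^'m) set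
     \<Rightarrow> (complex^'n^'n \<Rightarrow> complex^'m^'m) \<Rightarrow> bool" where
  "C_positive A C \<phi> \<longleftrightarrow> (\<forall>x\<in>P_cone A C. \<forall>c. dual_value A \<phi> x c \<longrightarrow> c \<in> \<real> \<and> 0 \<le> Re c)"

end

theory Submission
  imports Defs
begin

(*
  If phi is C-positive, its dual functional is well defined and complex linear on A (x) B(K),
  and real on self-adjoint elements.  The identity 1 (x) 1 is an order unit for the cone of
  self-adjoint x with (iota (x) alpha)(x) >= 0 for all alpha in C: every self-adjoint x is a
  real combination of tensors p p^* (x) Z with Z self-adjoint and p = e_i or p = e_i + c e_j,
  |c| = 1; for these l 1 - p p^* is again a sum of such rank-one terms, and Z + s 1 >= 0 for
  large s.  The M. Riesz extension theorem (a separating hyperplane argument) then extends the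
  real part of the dual functional from the self-adjoint part of A (x) B(K) to a functional
  <w, .> on all self-adjoint operators that is nonnegative on the cone.  The complex-linear
  functional tr(w^* .) is the dual functional of a map psi on B(H); psi extends phi and is
  C-positive.
*)

section \<open>Order units and the M. Riesz extension theorem\<close>

definition order_bounded :: "'a::real_vector set \<Rightarrow> 'a \<Rightarrow> 'a \<Rightarrow> bool" where
  "order_bounded K e x \<longleftrightarrow> (\<exists>t. x + t *\<^sub>R e \<in> K \<and> - x + t *\<^sub>R e \<in> K)"

lemma subspace_order_bounded:
  assumes "convex_cone K"
  shows "subspace (Collect (order_bounded K e))"
proof -
  have "order_bounded K e 0"
    unfolding order_bounded_def using convex_cone_contains_0[OF assms] by (auto intro!: exI[of _ 0])
  moreover have "order_bounded K e (x + y)" if x: "order_bounded K e x" and y: "order_bounded K e y" for x y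
  proof -
    obtain s t where "x + s *\<^sub>R e \<in> K" "- x + s *\<^sub>R e \<in> K" "y + t *\<^sub>R e \<in> K" "- y + t *\<^sub>R e \<in> K"
      using x y unfolding order_bounded_def by blast
    then have "(x + s *\<^sub>R e) + (y + t *\<^sub>R e) \<in> K" "(- x + s *\<^sub>R e) + (- y + t *\<^sub>R e) \<in> K"
      using assms convex_cone_add by blast+
    then show ?thesis
      unfolding order_bounded_def by (auto simp: algebra_simps intro!: exI[of _ "s + t"])
  qed
  moreover have "order_bounded K e (c *\<^sub>R x)" if x: "order_bounded K e x" for c x
  proof -
    obtain t where t: "x + t *\<^sub>R e \<in> K" "- x + t *\<^sub>R e \<in> K"
      using x unfolding order_bounded_def by blast
    have "\<bar>c\<bar> *\<^sub>R (x + t *\<^sub>R e) \<in> K" "\<bar>c\<bar> *\<^sub>R (- x + t *\<^sub>R e) \<in> K"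
      using convex_cone_scaleR[OF assms] t by auto
    then have "c *\<^sub>R x + (\<bar>c\<bar> * t) *\<^sub>R e \<in> K \<and> - (c *\<^sub>R x) + (\<bar>c\<bar> * t) *\<^sub>R e \<in> K"
      by (cases "c \<ge> 0") (auto simp: algebra_simps)
    then show ?thesis
      unfolding order_bounded_def by blast
  qed
  ultimately show ?thesis
    unfolding subspace_def by auto
qed

lemma order_bounded_diff:
  assumes "convex_cone K" "order_bounded K e x" "order_bounded K e y"
  shows "order_bounded K e (x - y)"
proof -
  have "x - y \<in> Collect (order_bounded K e)"
    using assms by (intro subspace_diff[OF subspace_order_bounded]) auto
  then show ?thesis by simp
qed

lemma order_bounded_scaleR:
  assumes "convex_cone K" "order_bounded K e x"
  shows "order_bounded K e (c *\<^sub>R x)"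
proof -
  have "c *\<^sub>R x \<in> Collect (order_bounded K e)"
    using assms by (intro subspace_scale[OF subspace_order_bounded]) auto
  then show ?thesis by simp
qed

lemma order_bounded_sum:
  assumes "convex_cone K" "\<And>i. i \<in> S \<Longrightarrow> order_bounded K e (f i)"
  shows "order_bounded K e (\<Sum>i\<in>S. f i)"
proof -
  have "(\<Sum>i\<in>S. f i) \<in> Collect (order_bounded K e)"
    using assms by (intro subspace_sum[OF subspace_order_bounded]) auto
  then show ?thesis by simp
qed

lemma convex_cone_sum:
  assumes "convex_cone K" "\<And>i. i \<in> S \<Longrightarrow> f i \<in> K"
  shows "(\<Sum>i\<in>S. f i) \<in> K"
  using assms(2)
  by (induction S rule: infinite_finite_induct)
    (auto intro: convex_cone_add[OF assms(1)] convex_cone_contains_0[OF assms(1)])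

lemma nonneg_if_nonneg_on_rays:
  fixes c d :: real
  assumes "\<And>t. t > 0 \<Longrightarrow> 0 \<le> c + t * d"
  shows "0 \<le> d"
proof (rule ccontr)
  assume "\<not> 0 \<le> d"
  then have "(\<bar>c\<bar> + 1) / - d > 0" and "((\<bar>c\<bar> + 1) / - d) * d = - (\<bar>c\<bar> + 1)"
    by (simp_all add: field_simps)
  with assms[of "(\<bar>c\<bar> + 1) / - d"] show False by linarith
qed

lemma separating_vector_cone_sum:
  fixes K U N :: "'a::euclidean_space set"
  assumes K: "convex_cone K" and U: "subspace U" and N: "subspace N"
    and disjoint: "\<And>k u h. k \<in> K \<Longrightarrow> u \<in> U \<Longrightarrow> h \<in> N \<Longrightarrow> e + (k + (u + h)) \<noteq> 0"
  shows "\<exists>a. a \<noteq> 0 \<and> (\<forall>k\<in>K. 0 \<le> a \<bullet> k) \<and> (\<forall>u\<in>U. a \<bullet> u = 0) \<and> (\<forall>h\<in>N. a \<bullet> h = 0)"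
proof -
  define S where "S = {e} + (K + (U + N))"
  have in_S: "e + (k + (u + h)) \<in> S" if "k \<in> K" "u \<in> U" "h \<in> N" for k u h
    unfolding S_def using that by (intro set_plus_intro) auto
  have "convex K"
    using K by (simp add: convex_cone_def)
  then have convex_S: "convex S"
    unfolding S_def by (intro convex_set_plus convex_singleton \<open>convex K\<close> subspace_imp_convex U N)
  have zero_notin_S: "0 \<notin> S"
    unfolding S_def using disjoint by (auto elim!: set_plus_elim)
  obtain a where "a \<noteq> 0" and a: "\<And>x. x \<in> S \<Longrightarrow> 0 \<le> a \<bullet> x"
    using separating_hyperplane_set_0[OF convex_S zero_notin_S] by blast
  have K0: "0 \<in> K" and U0: "0 \<in> U" and N0: "0 \<in> N"
    using convex_cone_contains_0[OF K] subspace_0[OF U] subspace_0[OF N] by blast+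
  have a_nonneg: "0 \<le> a \<bullet> (k + (u + h))" if "k \<in> K" "u \<in> U" "h \<in> N" for k u h
  proof (rule nonneg_if_nonneg_on_rays[of "a \<bullet> e"])
    fix t :: real
    assume "t > 0"
    then have "e + (t *\<^sub>R k + (t *\<^sub>R u + t *\<^sub>R h)) \<in> S"
      using that convex_cone_scaleR[OF K] by (intro in_S subspace_scale[OF U] subspace_scale[OF N]) auto
    then have "0 \<le> a \<bullet> (e + (t *\<^sub>R k + (t *\<^sub>R u + t *\<^sub>R h)))"
      by (rule a)
    then show "0 \<le> a \<bullet> e + t * (a \<bullet> (k + (u + h)))"
      by (simp add: inner_add_right distrib_left)
  qed
  have "0 \<le> a \<bullet> k" if "k \<in> K" for k
    using a_nonneg[OF that U0 N0] by simp
  moreover have "a \<bullet> u = 0" if "u \<in> U" for u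
    using a_nonneg[OF K0 that N0] a_nonneg[OF K0 subspace_neg[OF U that] N0] by simp
  moreover have "a \<bullet> h = 0" if "h \<in> N" for h
    using a_nonneg[OF K0 U0 that] a_nonneg[OF K0 U0 subspace_neg[OF N that]] by simp
  ultimately show ?thesis
    using \<open>a \<noteq> 0\<close> by blast
qed

lemma add_orthogonal_comp_eq_0:
  assumes "subspace W" "x \<in> W" "h \<in> W\<^sup>\<bottom>" "x + h = 0"
  shows "x = 0"
proof -
  have "h = - x"
    using assms(4) by (simp add: eq_neg_iff_add_eq_0 add.commute)
  then have "h \<in> W \<inter> W\<^sup>\<bottom>"
    using assms(3) subspace_neg[OF assms(1,2)] by simp
  then show ?thesis
    using orthogonal_Int_0[OF assms(1)] \<open>h = - x\<close> by simp
qed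

text \<open>Taking N the orthogonal complement of W forces the normal vector into W; the order unit
  then makes it strictly positive on e.\<close>
lemma separating_vector_order_unit:
  fixes W K U :: "'a::euclidean_space set"
  assumes W: "subspace W" and K: "convex_cone K" "K \<subseteq> W" and U: "subspace U" "U \<subseteq> W"
    and e: "e \<in> K" and unit: "\<And>x. x \<in> W \<Longrightarrow> \<exists>t. x + t *\<^sub>R e \<in> K"
    and disjoint: "\<And>k u. k \<in> K \<Longrightarrow> u \<in> U \<Longrightarrow> e + (k + u) \<noteq> 0"
  shows "\<exists>a\<in>W. (\<forall>k\<in>K. 0 \<le> a \<bullet> k) \<and> (\<forall>u\<in>U. a \<bullet> u = 0) \<and> 0 < a \<bullet> e"
proof -
  have disjoint_N: "e + (k + (u + h)) \<noteq> 0" if "k \<in> K" "u \<in> U" "h \<in> W\<^sup>\<bottom>" for k u h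
  proof -
    have "e + (k + u) \<in> W"
      using that e K(2) U(2) by (intro subspace_add[OF W]) auto
    then show ?thesis
      using add_orthogonal_comp_eq_0[OF W _ that(3)] disjoint[OF that(1,2)] by (metis add.assoc)
  qed
  obtain a where "a \<noteq> 0" and a_K: "\<forall>k\<in>K. 0 \<le> a \<bullet> k"
    and a_U: "\<forall>u\<in>U. a \<bullet> u = 0" and a_N: "\<forall>h\<in>W\<^sup>\<bottom>. a \<bullet> h = 0"
    using separating_vector_cone_sum[OF K(1) U(1) subspace_orthogonal_comp disjoint_N] by blast
  have "a \<in> W\<^sup>\<bottom>\<^sup>\<bottom>"
    using a_N by (auto simp: orthogonal_comp_def orthogonal_def inner_commute)
  then have "a \<in> W"
    by (simp add: orthogonal_comp_self[OF W])
  moreover have "a \<bullet> e > 0"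
  proof (rule ccontr)
    assume "\<not> a \<bullet> e > 0"
    then have ae: "a \<bullet> e = 0"
      using a_K e by force
    have "0 \<le> a \<bullet> y" if "y \<in> W" for y
    proof -
      obtain t where "y + t *\<^sub>R e \<in> K"
        using unit \<open>y \<in> W\<close> by blast
      then show ?thesis
        using a_K ae by (fastforce simp: inner_add_right)
    qed
    from this[of "- a"] \<open>a \<in> W\<close> W have "a \<bullet> a \<le> 0"
      by (simp add: subspace_neg)
    with \<open>a \<noteq> 0\<close> show False
      using inner_ge_zero[of a] by simp
  qed
  ultimately show ?thesis
    using a_K a_U by blast
qed

context
  fixes W V K :: "'a::euclidean_space set" and e :: 'a and f :: "'a \<Rightarrow> real"
  assumes W: "subspace W" and K: "convex_cone K" "K \<subseteq> W"
    and V: "subspace V" "V \<subseteq> W" and e: "e \<in> V" "e \<in> K"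
    and unit: "\<And>x. x \<in> W \<Longrightarrow> \<exists>t. x + t *\<^sub>R e \<in> K"
    and f_add: "\<And>x y. x \<in> V \<Longrightarrow> y \<in> V \<Longrightarrow> f (x + y) = f x + f y"
    and f_scale: "\<And>r x. x \<in> V \<Longrightarrow> f (r *\<^sub>R x) = r * f x"
    and f_pos: "\<And>x. x \<in> V \<Longrightarrow> x \<in> K \<Longrightarrow> 0 \<le> f x"
begin

lemma functional_shift: "x \<in> V \<Longrightarrow> f (x + t *\<^sub>R e) = f x + t * f e"
  using e(1) V(1) by (simp add: f_add f_scale subspace_scale)

lemma functional_vanishes_if_unit_zero:
  assumes "f e = 0" "v \<in> V"
  shows "f v = 0"
proof -
  have nonneg: "0 \<le> f x" if "x \<in> V" for x
  proof -
    obtain t where "x + t *\<^sub>R e \<in> K"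
      using unit V(2) \<open>x \<in> V\<close> by blast
    then show ?thesis
      using f_pos[of "x + t *\<^sub>R e"] functional_shift[OF that] assms(1) that e(1) V(1)
      by (simp add: subspace_add subspace_scale)
  qed
  show ?thesis
    using nonneg[OF assms(2)] nonneg[OF subspace_neg[OF V(1) assms(2)]] f_scale[OF assms(2), of "- 1"]
    by simp
qed

lemma unit_add_cone_add_kernel_nonzero:
  assumes "f e > 0" "k \<in> K" "u \<in> V" "f u = 0"
  shows "e + (k + u) \<noteq> 0"
proof
  assume "e + (k + u) = 0"
  then have k: "k = (- 1) *\<^sub>R (e + u)"
    by (simp add: algebra_simps eq_neg_iff_add_eq_0)
  have "e + u \<in> V"
    using V(1) e(1) assms(3) by (rule subspace_add)
  then have "k \<in> V" "f k = - 1 * f (e + u)"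
    unfolding k by (simp_all only: subspace_scale[OF V(1)] f_scale)
  moreover have "f (e + u) = f e"
    using f_add[OF e(1) assms(3)] assms(4) by simp
  ultimately have "k \<in> V" "f k = - f e"
    by simp_all
  with f_pos[of k] assms(1,2) show False
    by simp
qed

lemma positive_functional_extension:
  "\<exists>w\<in>W. (\<forall>k\<in>K. 0 \<le> w \<bullet> k) \<and> (\<forall>v\<in>V. w \<bullet> v = f v)"
proof (cases "f e = 0")
  case True
  then show ?thesis
    using subspace_0[OF W] functional_vanishes_if_unit_zero by (intro bexI[of _ 0]) auto
next
  case False
  then have "f e > 0"
    using f_pos e by fastforce
  define U where "U = {u \<in> V. f u = 0}"
  have "subspace U"
    using V(1) f_scale[OF e(1), of 0] unfolding U_def subspace_def by (auto simp: f_add f_scale)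
  moreover have "U \<subseteq> W"
    using V(2) unfolding U_def by blast
  ultimately obtain a where "a \<in> W" and a_K: "\<forall>k\<in>K. 0 \<le> a \<bullet> k"
    and a_U: "\<forall>u\<in>U. a \<bullet> u = 0" and "0 < a \<bullet> e"
    using separating_vector_order_unit[OF W K _ _ e(2) unit] unit_add_cone_add_kernel_nonzero[OF \<open>f e > 0\<close>]
    unfolding U_def by blast
  define w where "w = (f e / (a \<bullet> e)) *\<^sub>R a"
  have "w \<bullet> v = f v" if "v \<in> V" for v
  proof -
    have "v - (f v / f e) *\<^sub>R e \<in> U"
      using functional_shift[OF that, of "- (f v / f e)"] \<open>f e > 0\<close> V(1) that e(1)
      unfolding U_def by (simp add: subspace_diff subspace_scale)
    then have "a \<bullet> (v - (f v / f e) *\<^sub>R e) = 0"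
      using a_U by blast
    then have "a \<bullet> v = (f v / f e) * (a \<bullet> e)"
      by (simp add: inner_diff_right)
    then show ?thesis
      using \<open>f e > 0\<close> \<open>0 < a \<bullet> e\<close> by (simp add: w_def)
  qed
  moreover have "0 \<le> w \<bullet> k" if "k \<in> K" for k
    using a_K that \<open>f e > 0\<close> \<open>0 < a \<bullet> e\<close> by (simp add: w_def)
  moreover have "w \<in> W"
    unfolding w_def using W \<open>a \<in> W\<close> by (rule subspace_scale)
  ultimately show ?thesis
    by blast
qed

end

section \<open>Matrices and tensors\<close>

lemma mat_adj_component [simp]: "mat_adj a $ i $ j = cnj (a $ j $ i)"
  by (simp add: mat_adj_def)

lemma cscale_component [simp]: "cscale c a $ i $ j = c * a $ i $ j"
  by (simp add: cscale_def)

lemma tens_component [simp]: "tens a b $ p $ q = a $ fst p $ fst q * b $ snd p $ snd q"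
  by (simp add: tens_def)

lemma cscale_of_real: "cscale (of_real r) x = r *\<^sub>R x"
  by (simp add: vec_eq_iff scaleR_conv_of_real[where 'a=complex])

lemma linear_mat_adj: "linear mat_adj"
  by (rule linearI) (simp_all add: vec_eq_iff scaleR_conv_of_real[where 'a=complex])

lemma linear_cscale: "linear (cscale c)"
  by (rule linearI) (simp_all add: vec_eq_iff scaleR_conv_of_real[where 'a=complex] algebra_simps)

lemma bilinear_tens: "bilinear tens"
  unfolding bilinear_def
  by (auto intro!: linearI simp: vec_eq_iff scaleR_conv_of_real[where 'a=complex] algebra_simps)

lemmas tens_add_left = bilinear_ladd[OF bilinear_tens]
  and tens_add_right = bilinear_radd[OF bilinear_tens]
  and tens_diff_left = bilinear_lsub[OF bilinear_tens]
  and tens_scaleR_left = bilinear_lmul[OF bilinear_tens]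
  and tens_scaleR_right = bilinear_rmul[OF bilinear_tens]

lemma tens_sum_left: "tens (\<Sum>i\<in>S. f i) b = (\<Sum>i\<in>S. tens (f i) b)"
  by (induction S rule: infinite_finite_induct)
    (simp_all add: tens_add_left bilinear_lzero[OF bilinear_tens])

lemma tens_sum_right: "tens a (\<Sum>i\<in>S. f i) = (\<Sum>i\<in>S. tens a (f i))"
  by (induction S rule: infinite_finite_induct)
    (simp_all add: tens_add_right bilinear_rzero[OF bilinear_tens])

lemma tens_cscale_left: "tens (cscale c a) b = cscale c (tens a b)"
  by (simp add: vec_eq_iff mult.assoc)

lemma tens_cscale_right: "tens a (cscale c b) = cscale c (tens a b)"
  by (simp add: vec_eq_iff mult_ac)

lemma mat_adj_mat_1: "mat_adj (mat 1) = mat 1"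
  by (simp add: vec_eq_iff mat_def)

lemma tens_mat_1: "tens (mat 1) (mat 1) = mat 1"
  by (auto simp: vec_eq_iff mat_def prod_eq_iff)

lemma complex_linear_map_imp_linear: "complex_linear_map f \<Longrightarrow> linear f"
  unfolding complex_linear_map_def by (metis cscale_of_real linearI)

lemmas mat_adj_zero = linear_0[OF linear_mat_adj]
  and mat_adj_add = linear_add[OF linear_mat_adj]
  and mat_adj_scaleR = linear_scale[OF linear_mat_adj]

lemma subspace_self_adjoint: "subspace {x :: complex^'k::finite^'k. mat_adj x = x}"
  unfolding subspace_def by (simp add: mat_adj_zero mat_adj_add mat_adj_scaleR)

lemma self_adjoint_component: "mat_adj z = z \<Longrightarrow> cnj (z $ j $ i) = z $ i $ j"
  by (metis mat_adj_component)

definition outer :: "complex^'k::finite \<Rightarrow> complex^'k \<Rightarrow> complex^'k^'k" where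
  "outer p q = (\<chi> i j. p $ i * cnj (q $ j))"

lemma sum_outer_axis:
  "(\<Sum>r\<in>S. outer (axis r 1) (axis r 1)) = (\<chi> a b. if a = b \<and> a \<in> S then 1 else 0)"
proof -
  have "(\<Sum>r\<in>S. outer (axis r 1) (axis r 1) $ a $ b) = (if a = b \<and> a \<in> S then 1 else 0)" for a b
    by (simp add: outer_def axis_def if_distrib[of "\<lambda>x. x * _"] cong: if_cong)
  then show ?thesis
    by (simp add: vec_eq_iff sum_component)
qed

lemma sum_outer_axis_UNIV: "(\<Sum>r\<in>UNIV. outer (axis r 1) (axis r 1)) = mat 1"
  by (simp add: sum_outer_axis mat_def)

lemma matrix_eq_sum_units: "b = (\<Sum>k\<in>UNIV. \<Sum>l\<in>UNIV. cscale (b $ k $ l) (outer (axis k 1) (axis l 1)))"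
proof -
  have "cscale (b $ k $ l) (outer (axis k 1) (axis l 1)) $ i $ j = (if l = j then if k = i then b $ i $ j else 0 else 0)"
    for i j k l
    by (simp add: outer_def axis_def)
  then show ?thesis
    by (simp add: vec_eq_iff sum_component)
qed

lemma trace_mult_transpose: "trace (M ** transpose b) = (\<Sum>k\<in>UNIV. \<Sum>l\<in>UNIV. M $ k $ l * b $ k $ l)"
  by (simp add: trace_def matrix_matrix_mult_def transpose_def)

lemma trace_mult_transpose_outer_axis: "trace (M ** transpose (outer (axis k 1) (axis l 1))) = M $ k $ l"
proof -
  have "M $ i $ j * outer (axis k 1) (axis l 1) $ i $ j = (if j = l then if i = k then M $ k $ l else 0 else 0)"
    for i j
    by (simp add: outer_def axis_def)
  then show ?thesis
    by (simp add: trace_mult_transpose)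
qed

definition block :: "complex^('n::finite \<times> 'm::finite)^('n \<times> 'm) \<Rightarrow> 'n \<Rightarrow> 'n \<Rightarrow> complex^'m^'m" where
  "block x i j = (\<chi> k l. x $ (i, k) $ (j, l))"

lemma id_tens_eq_block: "id_tens \<alpha> x = (\<chi> p q. \<alpha> (block x (fst p) (fst q)) $ snd p $ snd q)"
  by (simp add: id_tens_def block_def)

lemma block_add: "block (x + y) i j = block x i j + block y i j"
  by (simp add: block_def vec_eq_iff)

lemma block_scaleR: "block (r *\<^sub>R x) i j = r *\<^sub>R block x i j"
  by (simp add: block_def vec_eq_iff)

lemma linear_id_tens: "linear \<alpha> \<Longrightarrow> linear (id_tens \<alpha>)"
  unfolding id_tens_eq_block
  by (rule linearI) (simp_all add: vec_eq_iff linear_add linear_scale block_add block_scaleR)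

lemma block_tens: "block (tens a b) i j = cscale (a $ i $ j) b"
  by (simp add: block_def vec_eq_iff)

lemma id_tens_tens: "complex_linear_map \<alpha> \<Longrightarrow> id_tens \<alpha> (tens a b) = tens a (\<alpha> b)"
  by (simp add: id_tens_eq_block block_tens complex_linear_map_def vec_eq_iff)

lemma matrix_eq_sum_tens: "x = (\<Sum>i\<in>UNIV. \<Sum>j\<in>UNIV. tens (outer (axis i 1) (axis j 1)) (block x i j))"
proof -
  have "tens (outer (axis i 1) (axis j 1)) (block x i j) $ (a, k) $ (b, l)
      = (if j = b then if i = a then x $ (a, k) $ (b, l) else 0 else 0)" for i j a k b l
    by (simp add: outer_def axis_def block_def)
  then have "(\<Sum>i\<in>UNIV. \<Sum>j\<in>UNIV. tens (outer (axis i 1) (axis j 1)) (block x i j) $ (a, k) $ (b, l))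
      = x $ (a, k) $ (b, l)" for a k b l
    by simp
  then show ?thesis
    by (simp add: vec_eq_iff sum_component)
qed

section \<open>Positive matrices\<close>

lemma linear_sform: "linear (\<lambda>M. sform u M w)"
  by (rule linearI) (simp_all add: sform_def scaleR_conv_of_real[where 'a=complex]
      algebra_simps sum.distrib sum_distrib_left)

lemma convex_cone_psd: "convex_cone (Collect psd)"
proof -
  interpret sform: linear "\<lambda>M. sform v M v" for v
    by (rule linear_sform)
  show ?thesis
    unfolding convex_cone_iff psd_def
    by (auto simp: sform.add sform.scale scaleR_conv_of_real[where 'a=complex] intro: Reals_mult)
qed

lemma sum_cmod_power2_eq_norm_power2: "(\<Sum>r\<in>UNIV. (cmod (v $ r))\<^sup>2) = (norm v)\<^sup>2"
  by (simp add: norm_vec_def L2_set_def sum_nonneg)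

lemma sform_mat_1: "sform v (mat 1) v = of_real ((norm v)\<^sup>2)"
proof -
  have "cnj (v $ r) * mat 1 $ r $ s * v $ s = (if s = r then cnj (v $ r) * v $ r else 0)" for r s
    by (simp add: mat_def)
  then have "sform v (mat 1) v = (\<Sum>r\<in>UNIV. cnj (v $ r) * v $ r)"
    by (simp add: sform_def)
  also have "\<dots> = of_real (\<Sum>r\<in>UNIV. (cmod (v $ r))\<^sup>2)"
    unfolding of_real_sum by (rule sum.cong[OF refl]) (simp only: complex_norm_square mult.commute)
  finally show ?thesis
    by (simp add: sum_cmod_power2_eq_norm_power2)
qed

lemma psd_mat_1: "psd (mat 1)"
  by (simp add: psd_def sform_mat_1)

lemma sform_self_adjoint_real:
  assumes "mat_adj Z = Z"
  shows "sform v Z v \<in> \<real>"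
proof -
  have "cnj (sform v Z v) = (\<Sum>r\<in>UNIV. \<Sum>s\<in>UNIV. v $ r * Z $ s $ r * cnj (v $ s))"
    unfolding sform_def by (simp add: self_adjoint_component[OF assms])
  also have "\<dots> = sform v Z v"
    unfolding sform_def by (subst sum.swap) (simp add: mult_ac)
  finally show ?thesis
    using Reals_cnj_iff by blast
qed

lemma Re_sform_lower_bound:
  "- ((\<Sum>r\<in>UNIV. \<Sum>s\<in>UNIV. cmod (Z $ r $ s)) * (norm v)\<^sup>2) \<le> Re (sform v Z v)"
proof -
  have "- (cmod (Z $ r $ s) * (norm v)\<^sup>2) \<le> Re (cnj (v $ r) * Z $ r $ s * v $ s)" for r s
  proof -
    have "cmod (v $ r) * cmod (v $ s) \<le> norm v * norm v"
      by (intro mult_mono Finite_Cartesian_Product.norm_nth_le) auto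
    then have "cmod (Z $ r $ s) * (cmod (v $ r) * cmod (v $ s)) \<le> cmod (Z $ r $ s) * (norm v)\<^sup>2"
      by (simp add: mult_left_mono power2_eq_square)
    then have "cmod (cnj (v $ r) * Z $ r $ s * v $ s) \<le> cmod (Z $ r $ s) * (norm v)\<^sup>2"
      by (simp add: norm_mult mult_ac)
    then show ?thesis
      using abs_Re_le_cmod[of "cnj (v $ r) * Z $ r $ s * v $ s"] by linarith
  qed
  then have "(\<Sum>r\<in>UNIV. \<Sum>s\<in>UNIV. - (cmod (Z $ r $ s) * (norm v)\<^sup>2))
      \<le> (\<Sum>r\<in>UNIV. \<Sum>s\<in>UNIV. Re (cnj (v $ r) * Z $ r $ s * v $ s))"
    by (intro sum_mono)
  then show ?thesis
    by (simp add: sform_def Re_sum sum_negf sum_distrib_right)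
qed

lemma psd_self_adjoint_shift:
  fixes Z :: "complex^'k::finite^'k"
  assumes "mat_adj Z = Z"
  shows "psd (Z + (\<Sum>r\<in>UNIV. \<Sum>s\<in>UNIV. cmod (Z $ r $ s)) *\<^sub>R mat 1)"
proof -
  interpret sform: linear "\<lambda>M. sform v M v" for v
    by (rule linear_sform)
  show ?thesis
    unfolding psd_def sform.add sform.scale sform_mat_1
  proof
    fix v :: "complex^'k"
    show "sform v Z v + (\<Sum>r\<in>UNIV. \<Sum>s\<in>UNIV. cmod (Z $ r $ s)) *\<^sub>R of_real ((norm v)\<^sup>2) \<in> \<real> \<and>
        0 \<le> Re (sform v Z v + (\<Sum>r\<in>UNIV. \<Sum>s\<in>UNIV. cmod (Z $ r $ s)) *\<^sub>R of_real ((norm v)\<^sup>2))"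
      using sform_self_adjoint_real[OF assms, of v] Re_sform_lower_bound[of Z v]
      by (auto simp: scaleR_conv_of_real[where 'a=complex] intro!: Reals_add Reals_mult)
  qed
qed

lemma sum_UNIV_prod: "(\<Sum>x\<in>UNIV. f x) = (\<Sum>i\<in>UNIV. \<Sum>k\<in>UNIV. f (i, k))"
  by (simp add: UNIV_Times_UNIV[symmetric] sum.cartesian_product del: UNIV_Times_UNIV)

lemma sform_tens_outer:
  fixes v :: "complex^('n::finite \<times> 'm::finite)" and p :: "complex^'n"
  defines "y \<equiv> \<chi> l. \<Sum>i\<in>UNIV. cnj (p $ i) * v $ (i, l)"
  shows "sform v (tens (outer p p) R) v = sform y R y"
proof -
  define g where "g i k j l = cnj (v $ (i, k)) * (p $ i * cnj (p $ j) * R $ k $ l) * v $ (j, l)"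
    for i k j l
  have "sform v (tens (outer p p) R) v = (\<Sum>i\<in>UNIV. \<Sum>k\<in>UNIV. \<Sum>j\<in>UNIV. \<Sum>l\<in>UNIV. g i k j l)"
    unfolding sform_def sum_UNIV_prod by (simp add: g_def outer_def)
  also have "\<dots> = (\<Sum>k\<in>UNIV. \<Sum>l\<in>UNIV. \<Sum>i\<in>UNIV. \<Sum>j\<in>UNIV. g i k j l)"
    by (subst sum.swap, subst (2) sum.swap, subst (3) sum.swap) (rule refl)
  also have "\<dots> = sform y R y"
    unfolding sform_def y_def
    by (simp add: g_def sum_distrib_left sum_distrib_right mult_ac)
  finally show ?thesis .
qed

lemma psd_tens_outer: "psd R \<Longrightarrow> psd (tens (outer p p) R)"
  unfolding psd_def sform_tens_outer by blast

section \<open>Real and imaginary parts\<close>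

definition mat_re :: "complex^'k::finite^'k \<Rightarrow> complex^'k^'k" where
  "mat_re z = (1/2) *\<^sub>R (z + mat_adj z)"

definition mat_im :: "complex^'k::finite^'k \<Rightarrow> complex^'k^'k" where
  "mat_im z = mat_re (cscale (- \<i>) z)"

lemma mat_re_component: "mat_re z $ i $ j = (z $ i $ j + cnj (z $ j $ i)) / 2"
  by (simp add: mat_re_def scaleR_conv_of_real[where 'a=complex])

lemma mat_im_component: "mat_im z $ i $ j = \<i> * (cnj (z $ j $ i) - z $ i $ j) / 2"
  by (simp add: mat_im_def mat_re_component algebra_simps)

lemma linear_mat_re: "linear mat_re"
  unfolding mat_re_def
  by (rule linearI) (simp_all add: mat_adj_add mat_adj_scaleR algebra_simps)

lemma linear_mat_im: "linear mat_im"
  unfolding mat_im_def by (rule linear_compose[OF linear_cscale linear_mat_re, unfolded o_def])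

lemma mat_adj_mat_re: "mat_adj (mat_re z) = mat_re z"
  by (simp add: vec_eq_iff mat_re_component)

lemma mat_adj_mat_im: "mat_adj (mat_im z) = mat_im z"
  by (simp add: mat_im_def mat_adj_mat_re)

lemma mat_re_self_adjoint: "mat_adj z = z \<Longrightarrow> mat_re z = z"
  by (simp add: mat_re_def flip: scaleR_2)

lemma mat_im_self_adjoint: "mat_adj z = z \<Longrightarrow> mat_im z = 0"
  by (simp add: vec_eq_iff mat_im_component self_adjoint_component)

lemma mat_re_add_mat_im: "mat_re z + cscale \<i> (mat_im z) = z"
  by (simp add: vec_eq_iff mat_re_component mat_im_component field_simps)

lemma mat_re_tens: "mat_re (tens a b) = tens (mat_re a) (mat_re b) - tens (mat_im a) (mat_im b)"
  by (simp add: vec_eq_iff mat_re_component mat_im_component field_simps power2_eq_square[symmetric])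

lemma mat_re_tens_self_adjoint: "mat_adj a = a \<Longrightarrow> mat_re (tens a b) = tens a (mat_re b)"
  by (simp add: mat_re_tens mat_re_self_adjoint mat_im_self_adjoint bilinear_lzero[OF bilinear_tens])

lemma mat_im_tens_self_adjoint: "mat_adj a = a \<Longrightarrow> mat_im (tens a b) = tens a (mat_im b)"
  by (simp add: mat_im_def tens_cscale_right[symmetric] mat_re_tens_self_adjoint)

section \<open>The identity as an order unit\<close>

definition id_tens_cone :: "(complex^'m::finite^'m \<Rightarrow> complex^'m^'m) set
    \<Rightarrow> (complex^('n::finite \<times> 'm)^('n \<times> 'm)) set" where
  "id_tens_cone C = {x. \<forall>\<alpha>\<in>C. psd (id_tens \<alpha> x)}"

lemma convex_cone_id_tens_cone:
  assumes "\<forall>\<alpha>\<in>C. positive_map \<alpha>"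
  shows "convex_cone (id_tens_cone C)"
proof -
  have lin: "linear (id_tens \<alpha>)" if "\<alpha> \<in> C" for \<alpha>
    using assms that by (simp add: positive_map_def linear_id_tens complex_linear_map_imp_linear)
  show ?thesis
    unfolding convex_cone_iff id_tens_cone_def
    using convex_cone_psd[unfolded convex_cone_iff]
    by (auto simp: linear_0[OF lin] linear_add[OF lin] linear_scale[OF lin])
qed

lemma tens_outer_in_id_tens_cone:
  assumes "\<forall>\<alpha>\<in>C. positive_map \<alpha>" "psd R"
  shows "tens (outer p p) R \<in> id_tens_cone C"
  using assms by (auto simp: id_tens_cone_def positive_map_def id_tens_tens intro: psd_tens_outer)

lemma tens_sum_outer_axis_in_id_tens_cone:
  assumes "\<forall>\<alpha>\<in>C. positive_map \<alpha>" "psd R"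
  shows "tens (\<Sum>r\<in>S. outer (axis r 1) (axis r 1)) R \<in> id_tens_cone C"
  unfolding tens_sum_left using assms by (intro convex_cone_sum convex_cone_id_tens_cone tens_outer_in_id_tens_cone)

lemma mat_1_in_id_tens_cone:
  assumes "\<forall>\<alpha>\<in>C. positive_map \<alpha>"
  shows "mat 1 \<in> id_tens_cone C"
  using tens_sum_outer_axis_in_id_tens_cone[OF assms psd_mat_1, of UNIV]
  by (simp add: sum_outer_axis_UNIV tens_mat_1)

lemma tens_shift_mat_1:
  "tens P Z + (l * s) *\<^sub>R mat 1 = tens P (Z + s *\<^sub>R mat 1) + tens (l *\<^sub>R mat 1 - P) (s *\<^sub>R mat 1)"
  by (simp add: tens_add_right tens_diff_left tens_scaleR_left tens_scaleR_right tens_mat_1 algebra_simps)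

text \<open>Split +-P \<otimes> Z + l s 1 as P \<otimes> (s 1 +- Z) + (l 1 - P) \<otimes> s 1, with s the entrywise norm of Z.\<close>
lemma tens_order_bounded:
  assumes C: "\<forall>\<alpha>\<in>C. positive_map \<alpha>"
    and P: "\<And>R. psd R \<Longrightarrow> tens P R \<in> id_tens_cone C"
    and P': "\<And>R. psd R \<Longrightarrow> tens (l *\<^sub>R mat 1 - P) R \<in> id_tens_cone C"
    and Z: "mat_adj Z = Z"
  shows "order_bounded (id_tens_cone C) (mat 1) (tens P Z)"
proof -
  define s where "s = (\<Sum>r\<in>UNIV. \<Sum>s\<in>UNIV. cmod (Z $ r $ s))"
  have "psd (Z + s *\<^sub>R mat 1)" "psd (- Z + s *\<^sub>R mat 1)"
    using psd_self_adjoint_shift[OF Z] psd_self_adjoint_shift[of "- Z"] Z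
    by (simp_all add: s_def linear_neg[OF linear_mat_adj])
  moreover have "psd (s *\<^sub>R mat 1)"
    using convex_cone_scaleR[OF convex_cone_psd, of s "mat 1"] psd_mat_1 by (simp add: s_def sum_nonneg)
  ultimately have "tens P (Z + s *\<^sub>R mat 1) + tens (l *\<^sub>R mat 1 - P) (s *\<^sub>R mat 1) \<in> id_tens_cone C"
      "tens P (- Z + s *\<^sub>R mat 1) + tens (l *\<^sub>R mat 1 - P) (s *\<^sub>R mat 1) \<in> id_tens_cone C"
    using convex_cone_id_tens_cone[OF C] by (auto intro!: convex_cone_add P P')
  then show ?thesis
    unfolding order_bounded_def tens_shift_mat_1[symmetric] bilinear_rneg[OF bilinear_tens] by blast
qed

lemma outer_axis_order_bounded:
  assumes C: "\<forall>\<alpha>\<in>C. positive_map \<alpha>" and Z: "mat_adj Z = Z"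
  shows "order_bounded (id_tens_cone C) (mat 1) (tens (outer (axis i 1) (axis i 1)) Z)"
proof (rule tens_order_bounded[OF C _ _ Z])
  have "1 *\<^sub>R mat 1 - outer (axis i 1) (axis i 1) = (\<Sum>r\<in>- {i}. outer (axis r 1) (axis r 1))"
    by (simp only: sum_outer_axis) (auto simp: vec_eq_iff mat_def outer_def axis_def)
  then show "tens (1 *\<^sub>R mat 1 - outer (axis i 1) (axis i 1)) R \<in> id_tens_cone C" if "psd R" for R
    using tens_sum_outer_axis_in_id_tens_cone[OF C that] by simp
qed (rule tens_outer_in_id_tens_cone[OF C])

lemma outer_axis_pair_order_bounded:
  assumes C: "\<forall>\<alpha>\<in>C. positive_map \<alpha>" and Z: "mat_adj Z = Z"
    and "i \<noteq> j" "cnj c * c = 1"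
  defines "p \<equiv> axis i 1 + axis j c"
  shows "order_bounded (id_tens_cone C) (mat 1) (tens (outer p p) Z)"
proof (rule tens_order_bounded[OF C _ _ Z])
  have "2 *\<^sub>R mat 1 - outer p p = outer (axis i 1 + axis j (- c)) (axis i 1 + axis j (- c))
      + 2 *\<^sub>R (\<Sum>r\<in>- {i, j}. outer (axis r 1) (axis r 1))"
    using assms(3,4) unfolding p_def
    by (simp only: sum_outer_axis)
      (auto simp: vec_eq_iff mat_def outer_def axis_def scaleR_conv_of_real[where 'a=complex] mult.commute)
  moreover have "tens (outer q q) R + 2 *\<^sub>R tens (\<Sum>r\<in>- {i, j}. outer (axis r 1) (axis r 1)) R
      \<in> id_tens_cone C" if "psd R" for q R
    using convex_cone_id_tens_cone[OF C] tens_sum_outer_axis_in_id_tens_cone[OF C that]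
      tens_outer_in_id_tens_cone[OF C that]
    by (intro convex_cone_add convex_cone_scaleR) auto
  ultimately show "tens (2 *\<^sub>R mat 1 - outer p p) R \<in> id_tens_cone C" if "psd R" for R
    using that by (simp add: tens_add_left tens_scaleR_left)
qed (rule tens_outer_in_id_tens_cone[OF C])

lemma matrix_unit_parts_order_bounded:
  assumes C: "\<forall>\<alpha>\<in>C. positive_map \<alpha>" and Z: "mat_adj Z = Z"
  shows "order_bounded (id_tens_cone C) (mat 1) (tens (mat_re (outer (axis i 1) (axis j 1))) Z)"
    and "order_bounded (id_tens_cone C) (mat 1) (tens (mat_im (outer (axis i 1) (axis j 1))) Z)"
proof -
  note K = convex_cone_id_tens_cone[OF C]
  note E = outer_axis_order_bounded[OF C Z]
  have "order_bounded (id_tens_cone C) (mat 1) (tens (mat_re (outer (axis i 1) (axis j 1))) Z) \<and>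
    order_bounded (id_tens_cone C) (mat 1) (tens (mat_im (outer (axis i 1) (axis j 1))) Z)"
  proof (cases "i = j")
    case True
    have "mat_re (outer (axis i 1) (axis j 1)) = outer (axis i 1) (axis i 1)"
      "mat_im (outer (axis i 1) (axis j 1)) = 0"
      using True by (auto simp: vec_eq_iff mat_re_component mat_im_component outer_def axis_def)
    then show ?thesis
      using E[of i] order_bounded_scaleR[OF K E, of 0] by (simp add: bilinear_lzero[OF bilinear_tens])
  next
    case False
    have re: "mat_re (outer (axis i 1) (axis j 1)) = (1/2) *\<^sub>R
        (outer (axis i 1 + axis j 1) (axis i 1 + axis j 1)
          - outer (axis i 1) (axis i 1) - outer (axis j 1) (axis j 1))"
      and im: "mat_im (outer (axis i 1) (axis j 1)) = (1/2) *\<^sub>R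
        (outer (axis i 1 + axis j \<i>) (axis i 1 + axis j \<i>)
          - outer (axis i 1) (axis i 1) - outer (axis j 1) (axis j 1))"
      using False by (auto simp: vec_eq_iff mat_re_component mat_im_component outer_def axis_def
          scaleR_conv_of_real[where 'a=complex])
    show ?thesis
      unfolding re im tens_scaleR_left tens_diff_left
      by (intro conjI order_bounded_scaleR[OF K] order_bounded_diff[OF K] E
          outer_axis_pair_order_bounded[OF C Z False]) simp_all
  qed
  then show "order_bounded (id_tens_cone C) (mat 1) (tens (mat_re (outer (axis i 1) (axis j 1))) Z)"
    "order_bounded (id_tens_cone C) (mat 1) (tens (mat_im (outer (axis i 1) (axis j 1))) Z)"
    by simp_all
qed

text \<open>Write x as a sum of tensors of matrix units with blocks of x; by mat_re_tens each summand
  of mat_re x = x reduces to the real and imaginary parts of matrix units.\<close>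
lemma self_adjoint_order_bounded:
  assumes C: "\<forall>\<alpha>\<in>C. positive_map \<alpha>" and x: "mat_adj x = x"
  shows "order_bounded (id_tens_cone C) (mat 1) x"
proof -
  note K = convex_cone_id_tens_cone[OF C]
  have "order_bounded (id_tens_cone C) (mat 1) (mat_re (tens (outer (axis i 1) (axis j 1)) (block x i j)))"
    for i j
    unfolding mat_re_tens
    using order_bounded_diff[OF K matrix_unit_parts_order_bounded(1)[OF C mat_adj_mat_re]
        matrix_unit_parts_order_bounded(2)[OF C mat_adj_mat_im]] .
  then have "order_bounded (id_tens_cone C) (mat 1)
      (\<Sum>i\<in>UNIV. \<Sum>j\<in>UNIV. mat_re (tens (outer (axis i 1) (axis j 1)) (block x i j)))"
    by (intro order_bounded_sum[OF K])
  moreover have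
    "mat_re x = (\<Sum>i\<in>UNIV. \<Sum>j\<in>UNIV. mat_re (tens (outer (axis i 1) (axis j 1)) (block x i j)))"
    by (subst matrix_eq_sum_tens[of x]) (simp add: linear_sum[OF linear_mat_re])
  ultimately have "order_bounded (id_tens_cone C) (mat 1) (mat_re x)"
    by simp
  then show ?thesis
    using mat_re_self_adjoint[OF x] by simp
qed

section \<open>The dual functional\<close>

lemma subspace_tens_space: "subspace (tens_space A)"
  by (simp add: tens_space_def subspace_span)

lemma tens_in_tens_space: "a \<in> A \<Longrightarrow> tens a b \<in> tens_space A"
  unfolding tens_space_def by (intro span_base) blast

lemma tens_space_closed:
  assumes "linear f" "\<And>a b. a \<in> A \<Longrightarrow> f (tens a b) \<in> tens_space A" "x \<in> tens_space A"
  shows "f x \<in> tens_space A"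
proof -
  have "tens_space A \<subseteq> f -` tens_space A"
    unfolding tens_space_def
    using assms(1,2) by (intro span_minimal linear_subspace_vimage) (auto simp: tens_space_def)
  then show ?thesis
    using assms(3) by blast
qed

lemma cscale_in_tens_space: "x \<in> tens_space A \<Longrightarrow> cscale c x \<in> tens_space A"
  by (rule tens_space_closed[OF linear_cscale])
    (simp_all add: tens_cscale_right[symmetric] tens_in_tens_space)

lemma mat_re_im_in_tens_space:
  assumes "real_operator_system A" "x \<in> tens_space A"
  shows "mat_re x \<in> tens_space A" "mat_im x \<in> tens_space A"
proof -
  have "mat_adj a = a" if "a \<in> A" for a
    using assms(1) that unfolding real_operator_system_def by blast
  then have "mat_re (tens a b) \<in> tens_space A" "mat_im (tens a b) \<in> tens_space A"
    if "a \<in> A" for a b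
    using that by (simp_all add: mat_re_tens_self_adjoint mat_im_tens_self_adjoint tens_in_tens_space)
  then show "mat_re x \<in> tens_space A" "mat_im x \<in> tens_space A"
    using tens_space_closed[OF linear_mat_re _ assms(2)] tens_space_closed[OF linear_mat_im _ assms(2)]
    by blast+
qed

lemma dual_value_zero: "dual_value A \<phi> 0 0"
  unfolding dual_value_def by (rule exI[of _ 0]) simp

lemma dual_value_tens: "a \<in> A \<Longrightarrow> dual_value A \<phi> (tens a b) (trace (\<phi> a ** transpose b))"
  unfolding dual_value_def by (intro exI[of _ 1] exI[of _ "\<lambda>_. a"] exI[of _ "\<lambda>_. b"]) simp

lemma sum_lessThan_add: "(\<Sum>i<N + (M::nat). f i) = (\<Sum>i<N. f i) + (\<Sum>i<M. f (N + i))"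
  by (induction M) (simp_all add: ac_simps)

lemma dual_value_add:
  assumes "dual_value A \<phi> x c" "dual_value A \<phi> y d"
  shows "dual_value A \<phi> (x + y) (c + d)"
proof -
  obtain N :: nat and a b where x: "\<forall>i<N. a i \<in> A" "x = (\<Sum>i<N. tens (a i) (b i))"
    "c = (\<Sum>i<N. trace (\<phi> (a i) ** transpose (b i)))"
    using assms(1) unfolding dual_value_def by blast
  obtain M :: nat and a' b' where y: "\<forall>i<M. a' i \<in> A" "y = (\<Sum>i<M. tens (a' i) (b' i))"
    "d = (\<Sum>i<M. trace (\<phi> (a' i) ** transpose (b' i)))"
    using assms(2) unfolding dual_value_def by blast
  define a'' where "a'' i = (if i < N then a i else a' (i - N))" for i
  define b'' where "b'' i = (if i < N then b i else b' (i - N))" for i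
  have "\<forall>i<N + M. a'' i \<in> A"
    using x(1) y(1) by (auto simp: a''_def)
  moreover have "x + y = (\<Sum>i<N + M. tens (a'' i) (b'' i))"
    by (simp add: sum_lessThan_add a''_def b''_def x(2) y(2))
  moreover have "c + d = (\<Sum>i<N + M. trace (\<phi> (a'' i) ** transpose (b'' i)))"
    by (simp add: sum_lessThan_add a''_def b''_def x(3) y(3))
  ultimately show ?thesis
    unfolding dual_value_def by (intro exI[of _ "N + M"] exI[of _ a''] exI[of _ b'']) simp
qed

lemma dual_value_cscale:
  assumes "dual_value A \<phi> x c"
  shows "dual_value A \<phi> (cscale z x) (z * c)"
proof -
  obtain N :: nat and a b where x: "\<forall>i<N. a i \<in> A" "x = (\<Sum>i<N. tens (a i) (b i))"
    "c = (\<Sum>i<N. trace (\<phi> (a i) ** transpose (b i)))"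
    using assms unfolding dual_value_def by blast
  have "cscale z x = (\<Sum>i<N. tens (a i) (cscale z (b i)))"
    by (simp add: x(2) tens_cscale_right linear_sum[OF linear_cscale])
  moreover have "z * c = (\<Sum>i<N. trace (\<phi> (a i) ** transpose (cscale z (b i))))"
    by (simp add: x(3) trace_mult_transpose sum_distrib_left mult_ac)
  ultimately show ?thesis
    using x(1) unfolding dual_value_def
    by (intro exI[of _ N] exI[of _ a] exI[of _ "\<lambda>i. cscale z (b i)"]) simp
qed

lemma dual_value_exists:
  assumes "x \<in> tens_space A"
  shows "\<exists>c. dual_value A \<phi> x c"
proof -
  have "subspace {x. \<exists>c. dual_value A \<phi> x c}"
    unfolding subspace_def
    using dual_value_zero dual_value_add dual_value_cscale[of A \<phi> _ _ "of_real _"]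
    by (fastforce simp: cscale_of_real)
  moreover have "tens a b \<in> {x. \<exists>c. dual_value A \<phi> x c}" if "a \<in> A" for a b
    using dual_value_tens[OF that] by blast
  ultimately show ?thesis
    using assms unfolding tens_space_def by (auto elim!: span_induct)
qed

text \<open>A choice that is the value of the dual functional on tens_space A once \<phi> is C-positive
  (dual_value_unique); it is arbitrary elsewhere.\<close>
definition dual_functional :: "(complex^'n::finite^'n) set \<Rightarrow> (complex^'n^'n \<Rightarrow> complex^'m::finite^'m)
    \<Rightarrow> complex^('n \<times> 'm)^('n \<times> 'm) \<Rightarrow> complex" where
  "dual_functional A \<phi> x = (SOME c. dual_value A \<phi> x c)"

context
  fixes A :: "(complex^'n::finite^'n) set" and C :: "(complex^'m::finite^'m \<Rightarrow> complex^'m^'m) set"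
    and \<phi> :: "complex^'n^'n \<Rightarrow> complex^'m^'m"
  assumes C: "\<forall>\<alpha>\<in>C. positive_map \<alpha>" and \<phi>: "C_positive A C \<phi>"
begin

lemma zero_in_P_cone: "0 \<in> P_cone A C"
  using convex_cone_contains_0[OF convex_cone_id_tens_cone[OF C]]
  by (simp add: P_cone_def tens_space_def span_zero id_tens_cone_def vec_eq_iff)

text \<open>c - d and d - c are both dual values at 0 \<in> P(A, C), hence nonnegative.\<close>
lemma dual_value_unique:
  assumes "dual_value A \<phi> x c" "dual_value A \<phi> x d"
  shows "c = d"
proof -
  have "x + cscale (- 1) x = 0"
    by (simp add: vec_eq_iff)
  then have "dual_value A \<phi> 0 (c - d)" "dual_value A \<phi> 0 (d - c)"
    using dual_value_add[OF assms(1) dual_value_cscale[OF assms(2), of "- 1"]]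
      dual_value_add[OF assms(2) dual_value_cscale[OF assms(1), of "- 1"]] by simp_all
  then have "0 \<le> Re (c - d)" "0 \<le> Re (d - c)" "c - d \<in> \<real>"
    using \<phi> zero_in_P_cone unfolding C_positive_def by blast+
  then show ?thesis
    by (simp add: complex_eq_iff complex_is_Real_iff)
qed

lemma dual_functional_eq: "dual_value A \<phi> x c \<Longrightarrow> dual_functional A \<phi> x = c"
  unfolding dual_functional_def by (rule some_equality) (auto intro: dual_value_unique)

lemma dual_value_dual_functional: "x \<in> tens_space A \<Longrightarrow> dual_value A \<phi> x (dual_functional A \<phi> x)"
  unfolding dual_functional_def by (rule someI_ex[OF dual_value_exists])

lemma dual_functional_add:
  "x \<in> tens_space A \<Longrightarrow> y \<in> tens_space A \<Longrightarrow>
    dual_functional A \<phi> (x + y) = dual_functional A \<phi> x + dual_functional A \<phi> y"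
  by (intro dual_functional_eq dual_value_add dual_value_dual_functional)

lemma dual_functional_cscale:
  "x \<in> tens_space A \<Longrightarrow> dual_functional A \<phi> (cscale z x) = z * dual_functional A \<phi> x"
  by (intro dual_functional_eq dual_value_cscale dual_value_dual_functional)

lemma dual_functional_scaleR:
  "x \<in> tens_space A \<Longrightarrow> dual_functional A \<phi> (r *\<^sub>R x) = of_real r * dual_functional A \<phi> x"
  using dual_functional_cscale[of x "of_real r"] by (simp add: cscale_of_real)

lemma dual_functional_nonneg:
  "x \<in> P_cone A C \<Longrightarrow> dual_functional A \<phi> x \<in> \<real> \<and> 0 \<le> Re (dual_functional A \<phi> x)"
  using \<phi> dual_value_dual_functional unfolding C_positive_def P_cone_def by blast

end

section \<open>The extension\<close>

definition hs_inner :: "complex^'k::finite^'k \<Rightarrow> complex^'k^'k \<Rightarrow> complex" where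
  "hs_inner w z = (\<Sum>p\<in>UNIV. \<Sum>q\<in>UNIV. cnj (w $ p $ q) * z $ p $ q)"

lemma hs_inner_add_right: "hs_inner w (x + y) = hs_inner w x + hs_inner w y"
  by (simp add: hs_inner_def algebra_simps sum.distrib)

lemma hs_inner_cscale_right: "hs_inner w (cscale c x) = c * hs_inner w x"
  by (simp add: hs_inner_def sum_distrib_left mult_ac)

lemma hs_inner_sum_right: "hs_inner w (\<Sum>i\<in>S. f i) = (\<Sum>i\<in>S. hs_inner w (f i))"
  by (induction S rule: infinite_finite_induct)
    (simp_all add: hs_inner_add_right hs_inner_def[of w 0])

lemma Re_hs_inner: "Re (hs_inner w z) = w \<bullet> z"
  by (simp add: hs_inner_def inner_vec_def inner_complex_def Re_sum)

lemma hs_inner_self_adjoint: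
  assumes "mat_adj w = w" "mat_adj z = z"
  shows "hs_inner w z = of_real (w \<bullet> z)"
proof -
  have "cnj (hs_inner w z) = hs_inner w z"
    unfolding hs_inner_def
    by (subst sum.swap)
      (simp add: self_adjoint_component[OF assms(1)] self_adjoint_component[OF assms(2)] mult.commute)
  then have "hs_inner w z \<in> \<real>"
    using Reals_cnj_iff by blast
  then show ?thesis
    by (simp add: complex_is_Real_iff complex_eq_iff Re_hs_inner)
qed

text \<open>The map whose dual functional is hs_inner w, see trace_dual_map.\<close>
definition dual_map ::
    "complex^('n::finite \<times> 'm::finite)^('n \<times> 'm) \<Rightarrow> complex^'n^'n \<Rightarrow> complex^'m^'m" where
  "dual_map w a = (\<chi> k l. hs_inner w (tens a (outer (axis k 1) (axis l 1))))"

lemma trace_dual_map: "trace (dual_map w a ** transpose b) = hs_inner w (tens a b)"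
proof -
  have "trace (dual_map w a ** transpose b) =
      (\<Sum>k\<in>UNIV. \<Sum>l\<in>UNIV. hs_inner w (cscale (b $ k $ l) (tens a (outer (axis k 1) (axis l 1)))))"
    by (simp add: trace_mult_transpose dual_map_def hs_inner_cscale_right mult.commute)
  also have "\<dots> = hs_inner w (tens a b)"
    by (subst (2) matrix_eq_sum_units)
      (simp add: hs_inner_sum_right tens_sum_right tens_cscale_right)
  finally show ?thesis .
qed

lemma complex_linear_map_dual_map: "complex_linear_map (dual_map w)"
  unfolding complex_linear_map_def dual_map_def
  by (simp add: vec_eq_iff tens_add_left tens_cscale_left hs_inner_add_right hs_inner_cscale_right)

lemma dual_value_dual_map: "dual_value B (dual_map w) x c \<Longrightarrow> c = hs_inner w x"
  unfolding dual_value_def by (auto simp: trace_dual_map hs_inner_sum_right)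

lemma C_positive_dual_map:
  assumes "mat_adj w = w" "\<And>k. mat_adj k = k \<Longrightarrow> k \<in> id_tens_cone C \<Longrightarrow> 0 \<le> w \<bullet> k"
  shows "C_positive UNIV C (dual_map w)"
  unfolding C_positive_def
proof (intro ballI allI impI)
  fix x c
  assume "x \<in> P_cone UNIV C" "dual_value UNIV (dual_map w) x c"
  then have "mat_adj x = x" "x \<in> id_tens_cone C" "c = hs_inner w x"
    by (auto simp: P_cone_def id_tens_cone_def dual_value_dual_map)
  then show "c \<in> \<real> \<and> 0 \<le> Re c"
    using assms by (simp add: hs_inner_self_adjoint)
qed

context
  fixes A :: "(complex^'n::finite^'n) set" and C :: "(complex^'m::finite^'m \<Rightarrow> complex^'m^'m) set"
    and \<phi> :: "complex^'n^'n \<Rightarrow> complex^'m^'m"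
  assumes A: "real_operator_system A" and C: "\<forall>\<alpha>\<in>C. positive_map \<alpha>" and \<phi>: "C_positive A C \<phi>"
begin

lemma mat_1_in_tens_space: "mat 1 \<in> tens_space A"
  using A tens_in_tens_space[of "mat 1" A "mat 1"] by (simp add: real_operator_system_def tens_mat_1)

lemma P_cone_shift:
  assumes "x \<in> tens_space A" "mat_adj x = x" "x + t *\<^sub>R mat 1 \<in> id_tens_cone C"
  shows "x + t *\<^sub>R mat 1 \<in> P_cone A C"
proof -
  have "x + t *\<^sub>R mat 1 \<in> tens_space A"
    using assms(1) mat_1_in_tens_space subspace_tens_space by (intro subspace_add subspace_scale)
  then show ?thesis
    using assms(2,3) unfolding P_cone_def id_tens_cone_def
    by (simp add: mat_adj_add mat_adj_scaleR mat_adj_mat_1)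
qed

lemma mat_1_in_P_cone: "mat 1 \<in> P_cone A C"
  using P_cone_shift[OF subspace_0[OF subspace_tens_space], of 1] mat_1_in_id_tens_cone[OF C]
  by (simp add: mat_adj_zero)

lemma dual_functional_self_adjoint_real:
  assumes "x \<in> tens_space A" "mat_adj x = x"
  shows "dual_functional A \<phi> x \<in> \<real>"
proof -
  obtain t where "x + t *\<^sub>R mat 1 \<in> id_tens_cone C"
    using self_adjoint_order_bounded[OF C assms(2)] unfolding order_bounded_def by blast
  then have "dual_functional A \<phi> (x + t *\<^sub>R mat 1) \<in> \<real>" "dual_functional A \<phi> (mat 1) \<in> \<real>"
    using dual_functional_nonneg[OF C \<phi>] P_cone_shift[OF assms] mat_1_in_P_cone by blast+
  moreover have "dual_functional A \<phi> (x + t *\<^sub>R mat 1) =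
      dual_functional A \<phi> x + of_real t * dual_functional A \<phi> (mat 1)"
    using dual_functional_add[OF C \<phi> assms(1) subspace_scale[OF subspace_tens_space mat_1_in_tens_space]]
      dual_functional_scaleR[OF C \<phi> mat_1_in_tens_space]
    by simp
  ultimately show ?thesis
    by (metis Reals_diff Reals_mult Reals_of_real add_diff_cancel_right')
qed

lemma positive_extension_vector:
  obtains w where "mat_adj w = w" "\<And>k. mat_adj k = k \<Longrightarrow> k \<in> id_tens_cone C \<Longrightarrow> 0 \<le> w \<bullet> k"
    "\<And>v. v \<in> tens_space A \<Longrightarrow> mat_adj v = v \<Longrightarrow> w \<bullet> v = Re (dual_functional A \<phi> v)"
proof -
  let ?W = "{x. mat_adj x = x}"
  have "convex_cone (?W \<inter> id_tens_cone C)"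
    using convex_cone_Inter[of "{?W, id_tens_cone C}"] convex_cone_id_tens_cone[OF C]
      subspace_imp_convex_cone[OF subspace_self_adjoint] by auto
  moreover have "\<exists>t. x + t *\<^sub>R mat 1 \<in> ?W \<inter> id_tens_cone C" if "x \<in> ?W" for x
    using self_adjoint_order_bounded[OF C] that
    by (auto simp: order_bounded_def mat_adj_add mat_adj_scaleR mat_adj_mat_1)
  moreover have "0 \<le> Re (dual_functional A \<phi> x)"
    if "x \<in> tens_space A \<inter> ?W" "x \<in> ?W \<inter> id_tens_cone C" for x
    using that dual_functional_nonneg[OF C \<phi>] unfolding P_cone_def id_tens_cone_def by auto
  ultimately have "\<exists>w\<in>?W. (\<forall>k\<in>?W \<inter> id_tens_cone C. 0 \<le> w \<bullet> k) \<and>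
      (\<forall>v\<in>tens_space A \<inter> ?W. w \<bullet> v = Re (dual_functional A \<phi> v))"
    using subspace_self_adjoint subspace_inter[OF subspace_tens_space subspace_self_adjoint]
      mat_1_in_tens_space mat_1_in_id_tens_cone[OF C] mat_adj_mat_1
    by (intro positive_functional_extension)
      (auto simp: dual_functional_add[OF C \<phi>] dual_functional_scaleR[OF C \<phi>])
  then show ?thesis
    using that by blast
qed

text \<open>Both sides are complex linear on tens_space A and agree on its self-adjoint part, where the
  dual functional is real.\<close>
lemma hs_inner_eq_dual_functional:
  assumes w: "mat_adj w = w"
      "\<And>v. v \<in> tens_space A \<Longrightarrow> mat_adj v = v \<Longrightarrow> w \<bullet> v = Re (dual_functional A \<phi> v)"
    and x: "x \<in> tens_space A"
  shows "hs_inner w x = dual_functional A \<phi> x"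
proof -
  have parts: "mat_re x \<in> tens_space A" "mat_im x \<in> tens_space A"
    using mat_re_im_in_tens_space[OF A x] by simp_all
  have "hs_inner w y = dual_functional A \<phi> y" if "y \<in> tens_space A" "mat_adj y = y" for y
    using that w dual_functional_self_adjoint_real[OF that]
    by (simp add: hs_inner_self_adjoint complex_eq_iff complex_is_Real_iff)
  then have "hs_inner w (mat_re x + cscale \<i> (mat_im x)) =
      dual_functional A \<phi> (mat_re x) + \<i> * dual_functional A \<phi> (mat_im x)"
    using parts by (simp add: hs_inner_add_right hs_inner_cscale_right mat_adj_mat_re mat_adj_mat_im)
  also have "\<dots> = dual_functional A \<phi> (mat_re x + cscale \<i> (mat_im x))"
    using dual_functional_add[OF C \<phi> parts(1) cscale_in_tens_space[OF parts(2)]]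
      dual_functional_cscale[OF C \<phi> parts(2)] by simp
  finally show ?thesis
    by (simp add: mat_re_add_mat_im)
qed

lemma dual_map_extends:
  assumes "\<And>x. x \<in> tens_space A \<Longrightarrow> hs_inner w x = dual_functional A \<phi> x" "a \<in> A"
  shows "dual_map w a = \<phi> a"
proof -
  have "dual_map w a $ k $ l = trace (\<phi> a ** transpose (outer (axis k 1) (axis l 1)))" for k l
    using assms(1)[OF tens_in_tens_space[OF assms(2)]]
      dual_functional_eq[OF C \<phi> dual_value_tens[OF assms(2)]] by (simp add: dual_map_def)
  then show ?thesis
    by (simp add: vec_eq_iff trace_mult_transpose_outer_axis)
qed

end

theorem theorem1:
  fixes A :: "(complex^'n^'n) set"
    and C :: "(complex^'m^'m \<Rightarrow> complex^'m^'m) set"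
    and \<phi> :: "complex^'n^'n \<Rightarrow> complex^'m^'m"
  assumes "real_operator_system A"
    and "mapping_cone C"
    and "real_linear_on A \<phi>"
    and "C_positive A C \<phi>"
  shows "\<exists>\<psi> :: complex^'n^'n \<Rightarrow> complex^'m^'m.
           complex_linear_map \<psi> \<and> C_positive UNIV C \<psi> \<and> (\<forall>a\<in>A. \<psi> a = \<phi> a)"
proof -
  have C: "\<forall>\<alpha>\<in>C. positive_map \<alpha>"
    using assms(2) by (simp add: mapping_cone_def)
  obtain w where w: "mat_adj w = w" "\<And>k. mat_adj k = k \<Longrightarrow> k \<in> id_tens_cone C \<Longrightarrow> 0 \<le> w \<bullet> k"
    "\<And>v. v \<in> tens_space A \<Longrightarrow> mat_adj v = v \<Longrightarrow> w \<bullet> v = Re (dual_functional A \<phi> v)"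
    using positive_extension_vector[OF assms(1) C assms(4)] by blast
  have "complex_linear_map (dual_map w)"
    by (rule complex_linear_map_dual_map)
  moreover have "C_positive UNIV C (dual_map w)"
    using w(1,2) by (rule C_positive_dual_map)
  moreover have "dual_map w a = \<phi> a" if "a \<in> A" for a
    using hs_inner_eq_dual_functional[OF assms(1) C assms(4) w(1,3)] that
    by (rule dual_map_extends[OF assms(1) C assms(4)])
  ultimately show ?thesis
    by blast
qed

end
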